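(* Let $I$ be an index set and let $\mu,\nu$ be probability measures on $\bigotimes_{i\in I}\mathcal B(\mathbb R)$. Then $\mu$ and $\nu$ have a common underlying copula measure, i.e. there is a copula measure $C$ on $\mathbb R^I$ such that for every finite $J\subseteq I$ and all $(x_j)_{j\in J}\in\mathbb R^J$, $$F_{C_J}\big((F_{\mu_j}(x_j))_{j\in J}\big)=F_{\mu_J}\big((x_j)_{j\in J}\big)\quad\text{and}\quad F_{C_J}\big((F_{\nu_j}(x_j))_{j\in J}\big)=F_{\nu_J}\big((x_j)_{j\in J}\big),$$ if and only if there exist stochastic processes $X=(X_i)_{i\in I}$ and $Y=(Y_i)_{i\in I}$ on a common probability space $(\Omega,\mathcal F,\mathbb P)$ with $X\sim\mu$, $Y\sim\nu$, such that $X_i$ and $Y_i$ are similarly ordered for all $i\in I$, i.e. $$\big(X_i(\omega)-X_i(\omega')\big)\big(Y_i(\omega)-Y_i(\omega')\big)\ge 0\quad \mathbb P\otimes\mathbb P\text{-a.s.}$$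
   Context: For a measure $\rho$ on $(\mathbb R^I,\bigotimes_{i\in I}\mathcal B(\mathbb R))$ and $J\subseteq I$, $\rho_J$ is the pushforward of $\rho$ under the coordinate projection onto $\mathbb R^J$, $\rho_i:=\rho_{\{i\}}$, and for finite $J$, $F_{\rho_J}$ is the cumulative distribution function of $\rho_J$. A copula measure on $\mathbb R^I$ is a probability measure on $\bigotimes_{i\in I}\mathcal B(\mathbb R)$ all of whose one-dimensional marginals are uniform on $[0,1]$. *)

theory Defs
  imports "HOL-Probability.Probability"
begin

abbreviation RI :: "'i set \<Rightarrow> ('i \<Rightarrow> real) measure" where
  "RI I \<equiv> PiM I (\<lambda>_. borel)"

definition marg :: "('i \<Rightarrow> real) measure \<Rightarrow> 'i set \<Rightarrow> ('i \<Rightarrow> real) measure" where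
  "marg \<rho> J = distr \<rho> (RI J) (\<lambda>x. restrict x J)"

definition marg1 :: "('i \<Rightarrow> real) measure \<Rightarrow> 'i \<Rightarrow> real measure" where
  "marg1 \<rho> i = distr \<rho> borel (\<lambda>x. x i)"

definition cdfJ :: "('i \<Rightarrow> real) measure \<Rightarrow> 'i set \<Rightarrow> ('i \<Rightarrow> real) \<Rightarrow> real" where
  "cdfJ \<rho> J x = measure (marg \<rho> J) {y \<in> space (RI J). \<forall>j\<in>J. y j \<le> x j}"

definition cdf1 :: "('i \<Rightarrow> real) measure \<Rightarrow> 'i \<Rightarrow> real \<Rightarrow> real" where
  "cdf1 \<rho> i t = measure (marg1 \<rho> i) {..t}"

definition copula_measure :: "'i set \<Rightarrow> ('i \<Rightarrow> real) measure \<Rightarrow> bool" where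
  "copula_measure I C \<longleftrightarrow> prob_space C \<and> sets C = sets (RI I) \<and>
     (\<forall>i\<in>I. marg1 C i = uniform_measure lborel {0..1})"

definition underlying_copula :: "'i set \<Rightarrow> ('i \<Rightarrow> real) measure \<Rightarrow> ('i \<Rightarrow> real) measure \<Rightarrow> bool" where
  "underlying_copula I C \<mu> \<longleftrightarrow>
     (\<forall>J x. finite J \<longrightarrow> J \<subseteq> I \<longrightarrow>
        cdfJ C J (\<lambda>j. cdf1 \<mu> j (x j)) = cdfJ \<mu> J x)"

definition similarly_ordered_coupling ::
  "'i set \<Rightarrow> ('i \<Rightarrow> real) measure \<Rightarrow> ('i \<Rightarrow> real) measure \<Rightarrow> 'w measure
    \<Rightarrow> ('w \<Rightarrow> 'i \<Rightarrow> real) \<Rightarrow> ('w \<Rightarrow> 'i \<Rightarrow> real) \<Rightarrow> bool" where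
  "similarly_ordered_coupling I \<mu> \<nu> M X Y \<longleftrightarrow>
     prob_space M \<and>
     X \<in> measurable M (RI I) \<and> Y \<in> measurable M (RI I) \<and>
     distr M (RI I) X = \<mu> \<and> distr M (RI I) Y = \<nu> \<and>
     (\<forall>i\<in>I. AE p in M \<Otimes>\<^sub>M M.
        (X (fst p) i - X (snd p) i) * (Y (fst p) i - Y (snd p) i) \<ge> 0)"

end

(* If C is a common copula, push one C-distributed vector U through the coordinatewise quantile
   functions of mu and of nu. Both resulting processes are nondecreasing functions of the same
   coordinates U_i, hence similarly ordered, and the copula identity says that their
   finite-dimensional distribution functions, and therefore their laws, are those of mu and nu.

   Conversely, for similarly ordered X ~ mu and Y ~ nu put Z_i = X_i + Y_i and apply Rueschendorf's
   distributional transform U_i = F_i(Z_i-) + V (F_i(Z_i) - F_i(Z_i-)) with V uniform and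
   independent of (X, Y). Each U_i is uniform. Similar ordering makes X_i almost surely a
   nondecreasing function of Z_i, so {X_i <= t} is a.s. contained in {U_i <= P(X_i <= t)}; both
   events have probability P(X_i <= t), hence they coincide a.s., and symmetrically for Y.
   So the law of U is a copula of both mu and nu. *)

theory Submission
  imports Defs
begin

section \<open>Lower orthants and finite-dimensional distribution functions\<close>

definition orthant :: "'i set \<Rightarrow> 'i set \<Rightarrow> ('i \<Rightarrow> real) \<Rightarrow> ('i \<Rightarrow> real) set" where
  "orthant I J x = {y \<in> space (RI I). \<forall>j\<in>J. y j \<le> x j}"

lemma orthant_in_sets [measurable]: "finite J \<Longrightarrow> J \<subseteq> I \<Longrightarrow> orthant I J x \<in> sets (RI I)"
  unfolding orthant_def by measurable auto

lemma sets_RI_orthants: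
  "sets (RI I) = sigma_sets (space (RI I)) {orthant I J x | J x. finite J \<and> J \<subseteq> I}"
  (is "_ = sigma_sets _ ?E")
proof
  show "sigma_sets (space (RI I)) ?E \<subseteq> sets (RI I)"
    by (intro sets.sigma_sets_subset) (auto intro: orthant_in_sets)
  have E: "?E \<subseteq> Pow (space (RI I))" by (auto simp: orthant_def)
  have "sets (RI I) \<subseteq> sets (sigma (space (RI I)) ?E)"
  proof (rule sets_PiM_in_sets)
    show "space (sigma (space (RI I)) ?E) = (\<Pi>\<^sub>E i\<in>I. space borel)"
      using E by (simp add: space_PiM)
    fix i A assume i: "i \<in> I" and A: "A \<in> sets (borel :: real measure)"
    have "(\<lambda>y. y i) \<in> borel_measurable (sigma (space (RI I)) ?E)"
    proof (subst borel_measurable_iff_le, intro allI)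
      fix a
      have "{y \<in> space (sigma (space (RI I)) ?E). y i \<le> a} = orthant I {i} (\<lambda>_. a)"
        using E by (simp add: orthant_def)
      also have "\<dots> \<in> sets (sigma (space (RI I)) ?E)"
        using E i by (auto intro: sigma_sets.Basic)
      finally show "{y \<in> space (sigma (space (RI I)) ?E). y i \<le> a}
          \<in> sets (sigma (space (RI I)) ?E)" .
    qed
    from measurable_sets[OF this A]
    show "{y \<in> space (sigma (space (RI I)) ?E). y i \<in> A} \<in> sets (sigma (space (RI I)) ?E)"
      by (simp add: vimage_def Int_def conj_commute)
  qed
  then show "sets (RI I) \<subseteq> sigma_sets (space (RI I)) ?E"
    using E by simp
qed

lemma Int_stable_orthants: "Int_stable {orthant I J x | J x. finite J \<and> J \<subseteq> I}"
proof (rule Int_stableI)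
  fix A B
  assume "A \<in> {orthant I J x | J x. finite J \<and> J \<subseteq> I}"
    and "B \<in> {orthant I J x | J x. finite J \<and> J \<subseteq> I}"
  then obtain J K x y where A: "A = orthant I J x" "finite J" "J \<subseteq> I"
    and B: "B = orthant I K y" "finite K" "K \<subseteq> I" by blast
  define z where
    "z j = (if j \<in> J \<and> j \<in> K then min (x j) (y j) else if j \<in> J then x j else y j)" for j
  have "A \<inter> B = orthant I (J \<union> K) z"
    unfolding A B z_def orthant_def by auto
  with A B show "A \<inter> B \<in> {orthant I J x | J x. finite J \<and> J \<subseteq> I}" by blast
qed

lemma orthant_preimage_in_sets:
  assumes "V \<in> measurable P (RI I)" "finite J" "J \<subseteq> I"
  shows "{\<omega> \<in> space P. \<forall>j\<in>J. V \<omega> j \<le> x j} \<in> sets P"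
proof -
  have "{\<omega> \<in> space P. \<forall>j\<in>J. V \<omega> j \<le> x j} = V -` orthant I J x \<inter> space P"
    using measurable_space[OF assms(1)] by (auto simp: orthant_def)
  then show ?thesis
    using assms by (simp add: measurable_sets)
qed

lemma cdfJ_distr:
  assumes V: "V \<in> measurable P (RI I)" and J: "finite J" "J \<subseteq> I"
  shows "cdfJ (distr P (RI I) V) J x = measure P {\<omega> \<in> space P. \<forall>j\<in>J. V \<omega> j \<le> x j}"
proof -
  have VJ: "(\<lambda>\<omega>. restrict (V \<omega>) J) \<in> measurable P (RI J)"
    using J by (intro measurable_compose[OF V measurable_restrict_subset])
  have "cdfJ (distr P (RI I) V) J x
      = measure (distr P (RI J) (\<lambda>\<omega>. restrict (V \<omega>) J)) (orthant J J x)"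
    unfolding cdfJ_def marg_def orthant_def
    using J by (subst distr_distr) (auto simp: comp_def intro!: measurable_restrict_subset V)
  also have "\<dots> = measure P ((\<lambda>\<omega>. restrict (V \<omega>) J) -` orthant J J x \<inter> space P)"
    using J by (intro measure_distr VJ orthant_in_sets) auto
  also have "\<dots> = measure P {\<omega> \<in> space P. \<forall>j\<in>J. V \<omega> j \<le> x j}"
    using J by (intro arg_cong[where f="measure P"]) (auto simp: orthant_def space_PiM)
  finally show ?thesis .
qed

lemma cdfJ_eq_measure:
  assumes "sets \<rho> = sets (RI I)" "finite J" "J \<subseteq> I"
  shows "cdfJ \<rho> J x = measure \<rho> (orthant I J x)"
proof -
  have "cdfJ \<rho> J x = cdfJ (distr \<rho> (RI I) (\<lambda>y. y)) J x"
    using assms(1) by (simp add: distr_id2)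
  also have "\<dots> = measure \<rho> (orthant I J x)"
    using assms by (subst cdfJ_distr) (auto simp: orthant_def dest: sets_eq_imp_space_eq)
  finally show ?thesis .
qed

lemma cdf1_distr:
  assumes "V \<in> measurable P (RI I)" "j \<in> I"
  shows "cdf1 (distr P (RI I) V) j t = measure P {\<omega> \<in> space P. V \<omega> j \<le> t}"
proof -
  have "(\<lambda>\<omega>. V \<omega> j) \<in> borel_measurable P"
    using assms by measurable
  then show ?thesis
    unfolding cdf1_def marg1_def using assms
    by (subst distr_distr) (auto simp: comp_def measure_distr vimage_def Int_def conj_commute)
qed

lemma cdfJ_distr_eqI:
  assumes V: "V \<in> measurable P (RI I)" and U: "U \<in> measurable P (RI I)"
    and J: "finite J" "J \<subseteq> I"
    and AE: "\<And>j. j \<in> J \<Longrightarrow> AE \<omega> in P. V \<omega> j \<le> x j \<longleftrightarrow> U \<omega> j \<le> c j"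
  shows "cdfJ (distr P (RI I) V) J x = cdfJ (distr P (RI I) U) J c"
proof -
  have "measure P {\<omega> \<in> space P. \<forall>j\<in>J. V \<omega> j \<le> x j}
      = measure P {\<omega> \<in> space P. \<forall>j\<in>J. U \<omega> j \<le> c j}"
  proof (rule measure_eq_AE)
    have "AE \<omega> in P. \<forall>j\<in>J. V \<omega> j \<le> x j \<longleftrightarrow> U \<omega> j \<le> c j"
      by (rule AE_finite_allI[OF J(1) AE])
    then show "AE \<omega> in P. \<omega> \<in> {\<omega> \<in> space P. \<forall>j\<in>J. V \<omega> j \<le> x j}
                    \<longleftrightarrow> \<omega> \<in> {\<omega> \<in> space P. \<forall>j\<in>J. U \<omega> j \<le> c j}"
      by eventually_elim auto
  qed (use J V U in \<open>auto intro: orthant_preimage_in_sets\<close>)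
  then show ?thesis
    using J by (simp add: cdfJ_distr[OF V] cdfJ_distr[OF U])
qed

lemma measure_eqI_cdfJ:
  assumes A: "prob_space A" "sets A = sets (RI I)" and B: "prob_space B" "sets B = sets (RI I)"
    and eq: "\<And>J x. finite J \<Longrightarrow> J \<subseteq> I \<Longrightarrow> cdfJ A J x = cdfJ B J x"
  shows "A = B"
proof (rule measure_eqI_generator_eq[where E="{orthant I J x | J x. finite J \<and> J \<subseteq> I}"
      and \<Omega>="space (RI I)" and A="\<lambda>_. space (RI I)"])
  interpret A: prob_space A by (rule A)
  interpret B: prob_space B by (rule B)
  show "Int_stable {orthant I J x | J x. finite J \<and> J \<subseteq> I}"
    by (rule Int_stable_orthants)
  show "{orthant I J x | J x. finite J \<and> J \<subseteq> I} \<subseteq> Pow (space (RI I))"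
    by (auto simp: orthant_def)
  show "sets A = sigma_sets (space (RI I)) {orthant I J x | J x. finite J \<and> J \<subseteq> I}"
    "sets B = sigma_sets (space (RI I)) {orthant I J x | J x. finite J \<and> J \<subseteq> I}"
    using A(2) B(2) by (simp_all only: sets_RI_orthants)
  have "space (RI I) = orthant I {} x" for x :: "'a \<Rightarrow> real"
    by (simp add: orthant_def)
  then show "range (\<lambda>_. space (RI I)) \<subseteq> {orthant I J x | J x. finite J \<and> J \<subseteq> I}"
    by blast
  show "(\<Union>n::nat. space (RI I)) = space (RI I)"
    by simp
  show "emeasure A (space (RI I)) \<noteq> \<infinity>" for n :: nat
    by simp
  fix X assume "X \<in> {orthant I J x | J x. finite J \<and> J \<subseteq> I}"
  then obtain J x where X: "X = orthant I J x" "finite J" "J \<subseteq> I"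
    by blast
  have "measure A X = measure B X"
    using eq[OF X(2,3), of x] cdfJ_eq_measure[OF A(2) X(2,3)] cdfJ_eq_measure[OF B(2) X(2,3)]
    by (simp add: X(1))
  then show "emeasure A X = emeasure B X"
    by (simp add: A.emeasure_eq_measure B.emeasure_eq_measure)
qed

lemma AE_pair_fst:
  assumes "sigma_finite_measure N" "AE x in M. P x"
  shows "AE p in M \<Otimes>\<^sub>M N. P (fst p)"
proof -
  from assms(2) obtain A where A: "{x \<in> space M. \<not> P x} \<subseteq> A" "A \<in> null_sets M"
    by (auto elim!: AE_E)
  then have "A \<times> space N \<in> null_sets (M \<Otimes>\<^sub>M N)"
    by (intro sigma_finite_measure.times_in_null_sets1[OF assms(1)]) auto
  then show ?thesis
    by (rule AE_I') (use A in \<open>auto simp: space_pair_measure\<close>)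
qed

lemma AE_pair_snd:
  assumes "sigma_finite_measure N" "AE y in N. P y"
  shows "AE p in M \<Otimes>\<^sub>M N. P (snd p)"
proof -
  from assms(2) obtain A where A: "{y \<in> space N. \<not> P y} \<subseteq> A" "A \<in> null_sets N"
    by (auto elim!: AE_E)
  then have "space M \<times> A \<in> null_sets (M \<Otimes>\<^sub>M N)"
    by (intro sigma_finite_measure.times_in_null_sets2[OF assms(1)]) auto
  then show ?thesis
    by (rule AE_I') (use A in \<open>auto simp: space_pair_measure\<close>)
qed

lemma distr_pair_fst_comp:
  assumes "prob_space N" "f \<in> measurable M K"
  shows "distr (M \<Otimes>\<^sub>M N) K (\<lambda>p. f (fst p)) = distr M K f"
proof -
  have "distr (M \<Otimes>\<^sub>M N) K (\<lambda>p. f (fst p)) = distr (distr (M \<Otimes>\<^sub>M N) M fst) K f"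
    using assms(2) by (subst distr_distr) (auto simp: comp_def)
  then show ?thesis
    using assms(1) by (simp add: prob_space.distr_pair_fst)
qed

lemma AE_similarly_ordered_mono_on:
  fixes T :: "'a \<Rightarrow> 'b::linorder" and f g :: "'b \<Rightarrow> real"
  assumes "prob_space M" "AE \<omega> in M. T \<omega> \<in> S" "mono_on S f" "mono_on S g"
  shows "AE p in M \<Otimes>\<^sub>M M. (f (T (fst p)) - f (T (snd p))) * (g (T (fst p)) - g (T (snd p))) \<ge> 0"
proof -
  have \<sigma>: "sigma_finite_measure M"
    using assms(1) by (simp add: prob_space_imp_sigma_finite)
  from AE_pair_fst[OF \<sigma> assms(2)] AE_pair_snd[OF \<sigma> assms(2)]
  show ?thesis
  proof eventually_elim
    case (elim p)
    show ?case
    proof (cases "T (fst p) \<le> T (snd p)")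
      case True
      then have "f (T (fst p)) \<le> f (T (snd p))" "g (T (fst p)) \<le> g (T (snd p))"
        using elim assms(3,4) by (auto intro: mono_onD)
      then show ?thesis
        by (intro mult_nonpos_nonpos) auto
    next
      case False
      then have "f (T (snd p)) \<le> f (T (fst p))" "g (T (snd p)) \<le> g (T (fst p))"
        using elim assms(3,4) by (auto intro: mono_onD)
      then show ?thesis
        by (intro mult_nonneg_nonneg) auto
    qed
  qed
qed

section \<open>Quantile transform\<close>

(* Junk value 0 outside (0,1); it is only evaluated at copula coordinates, which lie in (0,1)
   almost surely. *)
definition quantile :: "real measure \<Rightarrow> real \<Rightarrow> real" where
  "quantile F u = (if u \<in> {0<..<1} then Inf {x. u \<le> cdf F x} else 0)"

lemma quantile_le_iff:
  assumes "real_distribution F" "u \<in> {0<..<1}"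
  shows "quantile F u \<le> x \<longleftrightarrow> u \<le> cdf F x"
proof -
  interpret cdf_distribution F
    using assms(1) by (simp add: cdf_distribution_def)
  show ?thesis
    using pseudoinverse[of u x] assms(2) by (simp add: quantile_def)
qed

lemma mono_on_quantile: "real_distribution F \<Longrightarrow> mono_on {0<..<1} (quantile F)"
  by (intro mono_onI) (metis order.refl order.trans quantile_le_iff)

lemma borel_measurable_quantile [measurable]:
  assumes "real_distribution F"
  shows "quantile F \<in> borel_measurable borel"
proof -
  interpret cdf_distribution F
    using assms by (simp add: cdf_distribution_def)
  have "(\<lambda>u. if u \<in> {0<..<1} then Inf {x. u \<le> cdf F x} else 0) \<in> borel_measurable borel"
    by (subst measurable_If_restrict_space_iff)
      (auto simp del: greaterThanLessThan_iff simp: Collect_mem_eq measurable_CI)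
  then show ?thesis
    unfolding quantile_def[abs_def] .
qed

lemma real_distribution_marg1:
  assumes "prob_space \<rho>" "sets \<rho> = sets (RI I)" "j \<in> I"
  shows "real_distribution (marg1 \<rho> j)"
proof -
  have "(\<lambda>y. y j) \<in> borel_measurable \<rho>"
    using assms(2,3) by (simp add: measurable_cong_sets[OF assms(2) refl])
  then show ?thesis
    unfolding marg1_def by (rule prob_space.real_distribution_distr[OF assms(1)])
qed

lemma cdf_marg1: "cdf (marg1 \<rho> j) t = cdf1 \<rho> j t"
  by (simp add: cdf1_def cdf_def)

lemma AE_copula_coordinate_in_open_unit_interval:
  assumes C: "copula_measure I C" and j: "j \<in> I"
  shows "AE u in C. u j \<in> {0<..<1}"
proof -
  have "AE x in uniform_measure lborel {0..1::real}. x \<in> {0<..<1}"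
  proof (rule AE_uniform_measureI)
    show "AE x in lborel. x \<in> {0..1::real} \<longrightarrow> x \<in> {0<..<1}"
      using AE_lborel_singleton[of 0] AE_lborel_singleton[of 1] by eventually_elim auto
  qed simp
  moreover have "marg1 C j = uniform_measure lborel {0..1}"
    using C j by (simp add: copula_measure_def)
  ultimately have "AE x in distr C borel (\<lambda>u. u j). x \<in> {0<..<1}"
    by (simp only: marg1_def)
  moreover have "(\<lambda>u. u j) \<in> borel_measurable C"
    using C j unfolding copula_measure_def by (subst measurable_cong_sets[of C "RI I"]) auto
  ultimately show ?thesis
    by (simp add: AE_distr_iff)
qed

definition quantile_transform :: "'i set \<Rightarrow> ('i \<Rightarrow> real) measure \<Rightarrow> ('i \<Rightarrow> real) \<Rightarrow> 'i \<Rightarrow> real" where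
  "quantile_transform I \<mu> u = (\<lambda>i\<in>I. quantile (marg1 \<mu> i) (u i))"

lemma measurable_quantile_transform:
  assumes "prob_space \<mu>" "sets \<mu> = sets (RI I)" "sets C = sets (RI I)"
  shows "quantile_transform I \<mu> \<in> measurable C (RI I)"
  unfolding quantile_transform_def[abs_def] measurable_cong_sets[OF assms(3) refl]
  using real_distribution_marg1[OF assms(1,2)] by measurable

lemma distr_quantile_transform:
  assumes \<mu>: "prob_space \<mu>" "sets \<mu> = sets (RI I)"
    and C: "copula_measure I C" "underlying_copula I C \<mu>"
  shows "distr C (RI I) (quantile_transform I \<mu>) = \<mu>"
proof -
  have sC: "sets C = sets (RI I)" and pC: "prob_space C"
    using C(1) by (auto simp: copula_measure_def)
  have Q: "quantile_transform I \<mu> \<in> measurable C (RI I)"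
    by (rule measurable_quantile_transform[OF \<mu> sC])
  show ?thesis
  proof (rule measure_eqI_cdfJ)
    show "prob_space (distr C (RI I) (quantile_transform I \<mu>))"
      by (rule prob_space.prob_space_distr[OF pC Q])
    fix J x assume J: "finite J" "J \<subseteq> I"
    have "cdfJ (distr C (RI I) (quantile_transform I \<mu>)) J x
        = cdfJ (distr C (RI I) (\<lambda>u. u)) J (\<lambda>j. cdf1 \<mu> j (x j))"
    proof (rule cdfJ_distr_eqI[OF Q _ J])
      show "(\<lambda>u. u) \<in> measurable C (RI I)"
        by (simp add: measurable_cong_sets[OF sC refl])
      fix j assume "j \<in> J"
      with J have j: "j \<in> I" by auto
      from AE_copula_coordinate_in_open_unit_interval[OF C(1) j]
      show "AE u in C. quantile_transform I \<mu> u j \<le> x j \<longleftrightarrow> u j \<le> cdf1 \<mu> j (x j)"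
        by eventually_elim
          (simp add: j quantile_transform_def quantile_le_iff[OF real_distribution_marg1[OF \<mu> j]]
            cdf_marg1)
    qed
    also have "\<dots> = cdfJ \<mu> J x"
      using C(2) J sC by (simp add: distr_id2 underlying_copula_def)
    finally show "cdfJ (distr C (RI I) (quantile_transform I \<mu>)) J x = cdfJ \<mu> J x" .
  qed (use \<mu> in simp_all)
qed

lemma similarly_ordered_coupling_quantile_transforms:
  assumes \<mu>: "prob_space \<mu>" "sets \<mu> = sets (RI I)" and \<nu>: "prob_space \<nu>" "sets \<nu> = sets (RI I)"
    and C: "copula_measure I C" "underlying_copula I C \<mu>" "underlying_copula I C \<nu>"
  shows "similarly_ordered_coupling I \<mu> \<nu> (C \<Otimes>\<^sub>M C)
           (\<lambda>p. quantile_transform I \<mu> (fst p)) (\<lambda>p. quantile_transform I \<nu> (fst p))"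
proof -
  have sC: "sets C = sets (RI I)" and pC: "prob_space C"
    using C(1) by (auto simp: copula_measure_def)
  have pCC: "prob_space (C \<Otimes>\<^sub>M C)"
    by (rule prob_space_pair[OF pC pC])
  have Q\<mu>: "quantile_transform I \<mu> \<in> measurable C (RI I)"
    and Q\<nu>: "quantile_transform I \<nu> \<in> measurable C (RI I)"
    using measurable_quantile_transform sC \<mu> \<nu> by blast+
  have "AE q in (C \<Otimes>\<^sub>M C) \<Otimes>\<^sub>M (C \<Otimes>\<^sub>M C).
      (quantile_transform I \<mu> (fst (fst q)) i - quantile_transform I \<mu> (fst (snd q)) i)
      * (quantile_transform I \<nu> (fst (fst q)) i - quantile_transform I \<nu> (fst (snd q)) i) \<ge> 0"
    if i: "i \<in> I" for i
  proof -
    have "AE p in C \<Otimes>\<^sub>M C. fst p i \<in> {0<..<1}"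
      using AE_copula_coordinate_in_open_unit_interval[OF C(1) i] pC
      by (intro AE_pair_fst) (simp_all add: prob_space_imp_sigma_finite)
    from AE_similarly_ordered_mono_on[OF pCC this mono_on_quantile mono_on_quantile,
        OF real_distribution_marg1[OF \<mu> i] real_distribution_marg1[OF \<nu> i]]
    show ?thesis
      using i by (simp add: quantile_transform_def)
  qed
  then show ?thesis
    unfolding similarly_ordered_coupling_def
    using pCC Q\<mu> Q\<nu> distr_quantile_transform[OF \<mu> C(1,2)] distr_quantile_transform[OF \<nu> C(1,3)]
    by (simp add: distr_pair_fst_comp[OF pC])
qed

section \<open>Distributional transform\<close>

definition lborel_01 :: "real measure" where
  "lborel_01 = restrict_space lborel {0..1}"

lemma space_lborel_01 [simp]: "space lborel_01 = {0..1}"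
  by (simp add: lborel_01_def space_restrict_space)

lemma prob_space_lborel_01: "prob_space lborel_01"
  unfolding lborel_01_def
  by (auto simp: emeasure_restrict_space space_restrict_space intro!: prob_spaceI)

lemma borel_measurable_lborel_01 [measurable]: "(\<lambda>v. v) \<in> borel_measurable lborel_01"
  unfolding lborel_01_def by (intro measurable_restrict_space1) simp

lemma atLeastAtMost_in_sets_lborel_01: "0 \<le> c \<Longrightarrow> c \<le> 1 \<Longrightarrow> {0..c} \<in> sets lborel_01"
  unfolding lborel_01_def by (subst sets_restrict_space_iff) auto

lemma measure_Times_lborel_01:
  assumes "finite_measure N" "A \<in> sets N" "0 \<le> c" "c \<le> 1"
  shows "measure (N \<Otimes>\<^sub>M lborel_01) (A \<times> {0..c}) = measure N A * c"
proof -
  interpret L: prob_space lborel_01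
    by (rule prob_space_lborel_01)
  have "measure lborel_01 {0..c} = c"
    using assms(3,4) unfolding lborel_01_def by (subst measure_restrict_space) auto
  moreover have "emeasure (N \<Otimes>\<^sub>M lborel_01) (A \<times> {0..c}) = emeasure N A * emeasure lborel_01 {0..c}"
    using assms by (intro L.emeasure_pair_measure_Times atLeastAtMost_in_sets_lborel_01)
  ultimately show ?thesis
    by (simp add: measure_def enn2real_mult)
qed

lemma distr_eq_uniform_01I:
  assumes "prob_space P" "D \<in> borel_measurable P" "\<And>\<omega>. \<omega> \<in> space P \<Longrightarrow> D \<omega> \<in> {0..1}"
    and cdf: "\<And>s. 0 \<le> s \<Longrightarrow> s < 1 \<Longrightarrow> measure P {\<omega> \<in> space P. D \<omega> \<le> s} = s"
  shows "distr P borel D = uniform_measure lborel {0..1::real}"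
proof (rule cdf_unique)
  show "real_distribution (distr P borel D)"
    using assms(1,2) by (simp add: prob_space.real_distribution_distr)
  show "real_distribution (uniform_measure lborel {0..1::real})"
    by (auto simp: real_distribution_def real_distribution_axioms_def
        intro: prob_space_uniform_measure)
  show "cdf (distr P borel D) = cdf (uniform_measure lborel {0..1})"
  proof
    fix s :: real
    have "cdf (distr P borel D) s = measure P {\<omega> \<in> space P. D \<omega> \<le> s}"
      using assms(2) by (simp add: cdf_def measure_distr vimage_def Int_def conj_commute)
    also have "\<dots> = measure lborel ({0..1} \<inter> {..s})"
    proof (cases "s < 0 \<or> 1 \<le> s")
      case True
      then have "{\<omega> \<in> space P. D \<omega> \<le> s} = (if s < 0 then {} else space P)"
        "{0..1} \<inter> {..s} = (if s < 0 then {} else {0..1::real})"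
        using assms(3) by (fastforce dest: assms(3))+
      then show ?thesis
        using assms(1) by (simp add: prob_space.prob_space)
    next
      case False
      then have "{0..1} \<inter> {..s} = {0..s}"
        by auto
      then show ?thesis
        using False cdf[of s] by simp
    qed
    also have "\<dots> = cdf (uniform_measure lborel {0..1}) s"
      by (simp add: cdf_def)
    finally show "cdf (distr P borel D) s = cdf (uniform_measure lborel {0..1}) s" .
  qed
qed

(* By measure_lex_below it is the
   measure of the lexicographic lower set of (z, v) under F \<Otimes> lborel_01, which makes it uniform. *)
definition dtrans :: "real measure \<Rightarrow> real \<Rightarrow> real \<Rightarrow> real" where
  "dtrans F z v = measure F {..<z} + v * (cdf F z - measure F {..<z})"

context real_distribution
begin

lemma measure_lessThan_le_cdf: "measure M {..<z} \<le> cdf M z"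
  unfolding cdf_def by (intro finite_measure_mono) auto

lemma cdf_le_measure_lessThan: "y < z \<Longrightarrow> cdf M y \<le> measure M {..<z}"
  unfolding cdf_def by (intro finite_measure_mono) auto

lemma dtrans_bounds:
  assumes "v \<in> {0..1}"
  shows "measure M {..<z} \<le> dtrans M z v" "dtrans M z v \<le> cdf M z"
proof -
  have "0 \<le> v * (cdf M z - measure M {..<z})"
    "v * (cdf M z - measure M {..<z}) \<le> cdf M z - measure M {..<z}"
    using assms measure_lessThan_le_cdf by (auto intro: mult_left_le_one_le)
  then show "measure M {..<z} \<le> dtrans M z v" "dtrans M z v \<le> cdf M z"
    unfolding dtrans_def by auto
qed

lemma borel_measurable_dtrans [measurable]:
  assumes [measurable]: "f \<in> borel_measurable N" "g \<in> borel_measurable N"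
  shows "(\<lambda>x. dtrans M (f x) (g x)) \<in> borel_measurable N"
proof -
  have [measurable]: "cdf M \<in> borel_measurable borel"
    "(\<lambda>z. measure M {..<z}) \<in> borel_measurable borel"
    by (auto intro!: borel_measurable_mono monoI cdf_nondecreasing finite_measure_mono)
  show ?thesis
    unfolding dtrans_def by measurable
qed

lemma borel_measurable_dtrans_pair:
  "(\<lambda>p. dtrans M (fst p) (snd p)) \<in> borel_measurable (M \<Otimes>\<^sub>M lborel_01)"
proof -
  have "(\<lambda>z. z) \<in> borel_measurable M"
    by simp
  then show ?thesis
    by (intro borel_measurable_dtrans measurable_compose[OF measurable_fst]
        measurable_compose[OF measurable_snd borel_measurable_lborel_01])
qed

lemma measure_lessThan_quantile_le:
  assumes s: "s \<in> {0<..<1}"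
  shows "measure M {..<quantile M s} \<le> s"
proof (rule tendsto_upperbound[OF cdf_at_left])
  show "\<forall>\<^sub>F z in at_left (quantile M s). cdf M z \<le> s"
  proof (rule eventually_at_leftI[of "quantile M s - 1"])
    fix z assume "z \<in> {quantile M s - 1<..<quantile M s}"
    then show "cdf M z \<le> s"
      using quantile_le_iff[OF real_distribution_axioms s, of z] by auto
  qed simp
qed simp

lemma dtrans_mono_lex:
  assumes "v \<in> {0..1}" "c \<in> {0..1}" "z < q \<or> (z = q \<and> v \<le> c)"
  shows "dtrans M z v \<le> dtrans M q c"
  using assms(3)
proof
  assume "z < q"
  then show ?thesis
    using dtrans_bounds(2)[OF assms(1), of z] cdf_le_measure_lessThan[of z q]
      dtrans_bounds(1)[OF assms(2), of q]
    by linarith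
next
  assume "z = q \<and> v \<le> c"
  then show ?thesis
    using measure_lessThan_le_cdf[of q] by (auto simp: dtrans_def intro: mult_right_mono)
qed

lemma measure_lex_below:
  assumes "c \<in> {0..1}"
  shows "measure (M \<Otimes>\<^sub>M lborel_01) ({..<q} \<times> {0..1} \<union> {q} \<times> {0..c}) = dtrans M q c"
proof -
  interpret P: prob_space "M \<Otimes>\<^sub>M lborel_01"
    by (rule prob_space_pair[OF prob_space_axioms prob_space_lborel_01])
  have "measure M {q} = measure M ({..q} - {..<q})"
    by (intro arg_cong[where f="measure M"]) auto
  then have atom: "measure M {q} = cdf M q - measure M {..<q}"
    by (subst (asm) finite_measure_Diff) (auto simp: cdf_def)
  have "measure (M \<Otimes>\<^sub>M lborel_01) ({..<q} \<times> {0..1} \<union> {q} \<times> {0..c})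
      = measure (M \<Otimes>\<^sub>M lborel_01) ({..<q} \<times> {0..1}) + measure (M \<Otimes>\<^sub>M lborel_01) ({q} \<times> {0..c})"
    using assms by (intro P.finite_measure_Union pair_measureI atLeastAtMost_in_sets_lborel_01) auto
  also have "\<dots> = dtrans M q c"
    using assms atom
    by (simp add: measure_Times_lborel_01 finite_measure_axioms dtrans_def mult.commute)
  finally show ?thesis .
qed

lemma dtrans_quantile_eq:
  assumes s: "s \<in> {0<..<1}"
  obtains c where "c \<in> {0..1}" "dtrans M (quantile M s) c = s"
proof -
  define a where "a = measure M {..<quantile M s}"
  define b where "b = cdf M (quantile M s)"
  have "a \<le> s" "s \<le> b"
    using measure_lessThan_quantile_le[OF s]
      quantile_le_iff[OF real_distribution_axioms s, of "quantile M s"]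
    by (simp_all add: a_def b_def)
  show ?thesis
  proof (cases "a < b")
    case True
    with \<open>a \<le> s\<close> \<open>s \<le> b\<close> show ?thesis
      by (intro that[of "(s - a) / (b - a)"]) (simp_all add: dtrans_def a_def b_def field_simps)
  next
    case False
    with \<open>a \<le> s\<close> \<open>s \<le> b\<close> show ?thesis
      by (intro that[of 0]) (simp_all add: dtrans_def a_def)
  qed
qed

lemma dtrans_level_set:
  assumes s: "s \<in> {0<..<1}"
  obtains B where "B \<in> sets (M \<Otimes>\<^sub>M lborel_01)" "measure (M \<Otimes>\<^sub>M lborel_01) B = s"
    "{p \<in> space (M \<Otimes>\<^sub>M lborel_01). dtrans M (fst p) (snd p) < s} \<subseteq> B"
    "B \<subseteq> {p \<in> space (M \<Otimes>\<^sub>M lborel_01). dtrans M (fst p) (snd p) \<le> s}"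
proof -
  define q where "q = quantile M s"
  obtain c where c: "c \<in> {0..1}" "dtrans M q c = s"
    using dtrans_quantile_eq[OF s] unfolding q_def by blast
  define B where "B = {..<q} \<times> {0..1} \<union> {q} \<times> {0..c}"
  show ?thesis
  proof
    show "B \<in> sets (M \<Otimes>\<^sub>M lborel_01)"
      using c by (auto simp: B_def intro!: pair_measureI atLeastAtMost_in_sets_lborel_01)
    show "measure (M \<Otimes>\<^sub>M lborel_01) B = s"
      unfolding B_def using measure_lex_below[OF c(1)] c(2) by simp
    show "{p \<in> space (M \<Otimes>\<^sub>M lborel_01). dtrans M (fst p) (snd p) < s} \<subseteq> B"
    proof safe
      fix z v assume "(z, v) \<in> space (M \<Otimes>\<^sub>M lborel_01)" "dtrans M (fst (z, v)) (snd (z, v)) < s"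
      then have "v \<in> {0..1}" "\<not> dtrans M q c \<le> dtrans M z v"
        using c(2) by (auto simp: space_pair_measure)
      then have "\<not> (q < z \<or> (q = z \<and> c \<le> v))"
        using dtrans_mono_lex[OF c(1), of v q z] by blast
      then show "(z, v) \<in> B"
        using \<open>v \<in> {0..1}\<close> by (auto simp: B_def)
    qed
    show "B \<subseteq> {p \<in> space (M \<Otimes>\<^sub>M lborel_01). dtrans M (fst p) (snd p) \<le> s}"
      using c dtrans_mono_lex[OF _ c(1)] by (auto simp: B_def space_pair_measure)
  qed
qed

lemma measure_dtrans_le:
  assumes "0 \<le> s" "s < 1"
  shows "measure (M \<Otimes>\<^sub>M lborel_01) {p \<in> space (M \<Otimes>\<^sub>M lborel_01). dtrans M (fst p) (snd p) \<le> s} = s"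
    (is "measure ?P (?le s) = s")
proof -
  interpret P: prob_space ?P
    by (rule prob_space_pair[OF prob_space_axioms prob_space_lborel_01])
  have le_sets: "?le s \<in> sets ?P"
    by (intro borel_measurable_le borel_measurable_dtrans_pair borel_measurable_const)
  have "s \<le> measure ?P (?le s)"
  proof (cases "s = 0")
    case False
    with assms have "s \<in> {0<..<1}"
      by simp
    then obtain B where "B \<in> sets ?P" "measure ?P B = s" "B \<subseteq> ?le s"
      by (rule dtrans_level_set)
    then show ?thesis
      using P.finite_measure_mono le_sets by blast
  qed simp
  moreover have "measure ?P (?le s) \<le> s"
  proof (rule dense_ge_bounded[OF \<open>s < 1\<close>])
    fix r assume r: "s < r" "r < 1"
    with assms have "r \<in> {0<..<1}"
      by simp
    then obtain B where "B \<in> sets ?P" "measure ?P B = r"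
      "{p \<in> space ?P. dtrans M (fst p) (snd p) < r} \<subseteq> B"
      by (rule dtrans_level_set)
    moreover have "?le s \<subseteq> {p \<in> space ?P. dtrans M (fst p) (snd p) < r}"
      using r by auto
    ultimately show "measure ?P (?le s) \<le> r"
      using P.finite_measure_mono[of "?le s" B] by simp
  qed
  ultimately show ?thesis
    by simp
qed

lemma distr_dtrans_uniform:
  "distr (M \<Otimes>\<^sub>M lborel_01) borel (\<lambda>p. dtrans M (fst p) (snd p)) = uniform_measure lborel {0..1}"
proof (rule distr_eq_uniform_01I[OF prob_space_pair[OF prob_space_axioms prob_space_lborel_01]
      borel_measurable_dtrans_pair])
  fix p assume "p \<in> space (M \<Otimes>\<^sub>M lborel_01)"
  then have "snd p \<in> {0..1}"
    by (auto simp: space_pair_measure)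
  then show "dtrans M (fst p) (snd p) \<in> {0..1}"
    using dtrans_bounds[of "snd p" "fst p"] cdf_bounded_prob[of "fst p"]
    by (auto intro: order_trans[OF measure_nonneg])
qed (rule measure_dtrans_le)

end

lemma distr_dtrans_random_variable:
  assumes M: "prob_space M" and Z: "Z \<in> borel_measurable M"
  shows "distr (M \<Otimes>\<^sub>M lborel_01) borel (\<lambda>p. dtrans (distr M borel Z) (Z (fst p)) (snd p))
    = uniform_measure lborel {0..1}"
proof -
  let ?F = "distr M borel Z"
  interpret F: real_distribution ?F
    using M Z by (simp add: prob_space.real_distribution_distr)
  have L: "prob_space lborel_01"
    by (rule prob_space_lborel_01)
  have "distr (M \<Otimes>\<^sub>M lborel_01) (borel \<Otimes>\<^sub>M lborel_01) (\<lambda>p. (Z (fst p), snd p))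
      = ?F \<Otimes>\<^sub>M distr lborel_01 lborel_01 (\<lambda>v. v)"
    using pair_measure_distr[OF Z measurable_ident_sets[OF refl], of lborel_01] L
    by (simp add: split_beta' prob_space_imp_sigma_finite)
  also have "\<dots> = ?F \<Otimes>\<^sub>M lborel_01"
    by simp
  finally have pair: "distr (M \<Otimes>\<^sub>M lborel_01) (borel \<Otimes>\<^sub>M lborel_01) (\<lambda>p. (Z (fst p), snd p))
      = ?F \<Otimes>\<^sub>M lborel_01" .
  have "(\<lambda>p. dtrans ?F (fst p) (snd p)) \<in> borel_measurable (borel \<Otimes>\<^sub>M lborel_01)"
    using F.borel_measurable_dtrans_pair
    by (simp add: measurable_cong_sets[OF sets_pair_measure_cong[OF F.events_eq_borel refl] refl])
  then have "distr (M \<Otimes>\<^sub>M lborel_01) borel (\<lambda>p. dtrans ?F (Z (fst p)) (snd p))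
      = distr (distr (M \<Otimes>\<^sub>M lborel_01) (borel \<Otimes>\<^sub>M lborel_01) (\<lambda>p. (Z (fst p), snd p))) borel
          (\<lambda>p. dtrans ?F (fst p) (snd p))"
    using Z by (subst distr_distr) (auto simp: comp_def)
  then show ?thesis
    by (simp only: pair F.distr_dtrans_uniform)
qed

lemma measure_le_dtrans_random_variable:
  assumes M: "prob_space M" and Z: "Z \<in> borel_measurable M" and c: "c \<in> {0..1}"
  shows "measure (M \<Otimes>\<^sub>M lborel_01)
      {p \<in> space (M \<Otimes>\<^sub>M lborel_01). dtrans (distr M borel Z) (Z (fst p)) (snd p) \<le> c} = c"
proof -
  interpret F: real_distribution "distr M borel Z"
    using M Z by (simp add: prob_space.real_distribution_distr)
  have D: "(\<lambda>p. dtrans (distr M borel Z) (Z (fst p)) (snd p)) \<in> borel_measurable (M \<Otimes>\<^sub>M lborel_01)"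
    using Z by measurable
  have "measure (M \<Otimes>\<^sub>M lborel_01)
        {p \<in> space (M \<Otimes>\<^sub>M lborel_01). dtrans (distr M borel Z) (Z (fst p)) (snd p) \<le> c}
      = measure (distr (M \<Otimes>\<^sub>M lborel_01) borel
          (\<lambda>p. dtrans (distr M borel Z) (Z (fst p)) (snd p))) {..c}"
    using D by (simp add: measure_distr vimage_def Int_def conj_commute)
  also have "\<dots> = c"
    using c by (simp add: distr_dtrans_random_variable[OF M Z] Int_absorb1)
  finally show ?thesis .
qed

section \<open>The copula of a similarly ordered coupling\<close>

lemma (in finite_measure) AE_iff_of_AE_imp:
  assumes imp: "AE x in M. x \<in> A \<longrightarrow> x \<in> B" and sets: "A \<in> sets M" "B \<in> sets M"
    and le: "measure M B \<le> measure M A"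
  shows "AE x in M. x \<in> A \<longleftrightarrow> x \<in> B"
proof -
  have "measure M (B \<inter> A) = measure M A"
    using imp sets by (intro measure_eq_AE) auto
  then have "measure M (B - A) = 0"
    using le sets finite_measure_Diff'[of B A] measure_le_0_iff[of M "B - A"]
    by (simp add: finite_measure_mono)
  then have "B - A \<in> null_sets M"
    using sets by (simp add: emeasure_eq_measure null_sets_def)
  from AE_not_in[OF this] imp show ?thesis
    by eventually_elim auto
qed

lemma similarly_ordered_le_of_sum_le:
  fixes x x' y y' :: real
  assumes "(x - x') * (y - y') \<ge> 0" "x' + y' \<le> x + y"
  shows "x' \<le> x"
  using assms by (cases "x' \<le> x") (auto simp: zero_le_mult_iff)

lemma AE_measure_sum_le_measure_le:
  fixes X Y :: "'a \<Rightarrow> real"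
  assumes M: "prob_space M" and X: "X \<in> borel_measurable M" and Y: "Y \<in> borel_measurable M"
    and sim: "AE p in M \<Otimes>\<^sub>M M. (X (fst p) - X (snd p)) * (Y (fst p) - Y (snd p)) \<ge> 0"
  shows "AE \<omega> in M. measure M {\<omega>' \<in> space M. X \<omega>' + Y \<omega>' \<le> X \<omega> + Y \<omega>}
                   \<le> measure M {\<omega>' \<in> space M. X \<omega>' \<le> X \<omega>}"
proof -
  interpret M: prob_space M
    by (rule M)
  interpret MM: pair_sigma_finite M M
    by unfold_locales
  from MM.AE_pair[OF sim]
  have "AE \<omega> in M. AE \<omega>' in M. (X \<omega> - X \<omega>') * (Y \<omega> - Y \<omega>') \<ge> 0"
    by simp
  then show ?thesis
  proof eventually_elim
    case (elim \<omega>)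
    show ?case
    proof (rule M.finite_measure_mono_AE)
      show "{\<omega>' \<in> space M. X \<omega>' \<le> X \<omega>} \<in> sets M"
        using X by measurable
      from elim show "AE \<omega>' in M. \<omega>' \<in> {\<omega>' \<in> space M. X \<omega>' + Y \<omega>' \<le> X \<omega> + Y \<omega>}
          \<longrightarrow> \<omega>' \<in> {\<omega>' \<in> space M. X \<omega>' \<le> X \<omega>}"
        by eventually_elim (auto intro: similarly_ordered_le_of_sum_le)
    qed
  qed
qed

lemma AE_le_imp_dtrans_le:
  fixes X Y :: "'a \<Rightarrow> real"
  assumes M: "prob_space M" and X: "X \<in> borel_measurable M" and Y: "Y \<in> borel_measurable M"
    and sim: "AE p in M \<Otimes>\<^sub>M M. (X (fst p) - X (snd p)) * (Y (fst p) - Y (snd p)) \<ge> 0"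
  shows "AE p in M \<Otimes>\<^sub>M lborel_01. X (fst p) \<le> t \<longrightarrow>
    dtrans (distr M borel (\<lambda>\<omega>. X \<omega> + Y \<omega>)) (X (fst p) + Y (fst p)) (snd p)
      \<le> measure M {\<omega> \<in> space M. X \<omega> \<le> t}"
proof -
  interpret M: prob_space M
    by (rule M)
  let ?F = "distr M borel (\<lambda>\<omega>. X \<omega> + Y \<omega>)"
  interpret F: real_distribution ?F
    using X Y by simp
  have cdf_F: "cdf ?F z = measure M {\<omega>' \<in> space M. X \<omega>' + Y \<omega>' \<le> z}" for z
    using X Y by (simp add: cdf_def measure_distr vimage_def Int_def conj_commute)
  have "AE p in M \<Otimes>\<^sub>M lborel_01. measure M {\<omega>' \<in> space M. X \<omega>' + Y \<omega>' \<le> X (fst p) + Y (fst p)}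
                   \<le> measure M {\<omega>' \<in> space M. X \<omega>' \<le> X (fst p)}"
    using AE_measure_sum_le_measure_le[OF M X Y sim] prob_space_lborel_01
    by (intro AE_pair_fst) (simp_all add: prob_space_imp_sigma_finite)
  with AE_space show ?thesis
  proof eventually_elim
    case (elim p)
    show ?case
    proof
      assume "X (fst p) \<le> t"
      have "snd p \<in> {0..1}"
        using elim by (auto simp: space_pair_measure)
      then have "dtrans ?F (X (fst p) + Y (fst p)) (snd p) \<le> cdf ?F (X (fst p) + Y (fst p))"
        by (rule F.dtrans_bounds(2))
      also have "\<dots> \<le> measure M {\<omega>' \<in> space M. X \<omega>' \<le> X (fst p)}"
        using elim by (simp add: cdf_F)
      also have "\<dots> \<le> measure M {\<omega> \<in> space M. X \<omega> \<le> t}"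
        using \<open>X (fst p) \<le> t\<close> X by (intro M.finite_measure_mono) auto
      finally show "dtrans ?F (X (fst p) + Y (fst p)) (snd p) \<le> measure M {\<omega> \<in> space M. X \<omega> \<le> t}" .
    qed
  qed
qed

lemma AE_le_iff_dtrans_le:
  fixes X Y :: "'a \<Rightarrow> real"
  assumes M: "prob_space M" and X: "X \<in> borel_measurable M" and Y: "Y \<in> borel_measurable M"
    and sim: "AE p in M \<Otimes>\<^sub>M M. (X (fst p) - X (snd p)) * (Y (fst p) - Y (snd p)) \<ge> 0"
  shows "AE p in M \<Otimes>\<^sub>M lborel_01. X (fst p) \<le> t \<longleftrightarrow>
    dtrans (distr M borel (\<lambda>\<omega>. X \<omega> + Y \<omega>)) (X (fst p) + Y (fst p)) (snd p)
      \<le> measure M {\<omega> \<in> space M. X \<omega> \<le> t}"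
proof -
  interpret M: prob_space M
    by (rule M)
  interpret F: real_distribution "distr M borel (\<lambda>\<omega>. X \<omega> + Y \<omega>)"
    using X Y by simp
  interpret P: prob_space "M \<Otimes>\<^sub>M lborel_01"
    by (rule prob_space_pair[OF M prob_space_lborel_01])
  let ?c = "measure M {\<omega> \<in> space M. X \<omega> \<le> t}"
  let ?A = "{p \<in> space (M \<Otimes>\<^sub>M lborel_01). X (fst p) \<le> t}"
  let ?B = "{p \<in> space (M \<Otimes>\<^sub>M lborel_01).
              dtrans (distr M borel (\<lambda>\<omega>. X \<omega> + Y \<omega>)) (X (fst p) + Y (fst p)) (snd p) \<le> ?c}"
  have imp: "AE p in M \<Otimes>\<^sub>M lborel_01. p \<in> ?A \<longrightarrow> p \<in> ?B"
    using AE_le_imp_dtrans_le[OF M X Y sim, of t] by eventually_elim auto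
  have "?A = {\<omega> \<in> space M. X \<omega> \<le> t} \<times> {0..1}"
    by (auto simp: space_pair_measure)
  then have A: "measure (M \<Otimes>\<^sub>M lborel_01) ?A = ?c"
    using X by (simp add: measure_Times_lborel_01 M.finite_measure_axioms)
  have B: "measure (M \<Otimes>\<^sub>M lborel_01) ?B = ?c"
    using measure_le_dtrans_random_variable[OF M, of "\<lambda>\<omega>. X \<omega> + Y \<omega>" ?c] X Y by simp
  have "?A \<in> sets (M \<Otimes>\<^sub>M lborel_01)" "?B \<in> sets (M \<Otimes>\<^sub>M lborel_01)"
    using X Y by measurable
  from P.AE_iff_of_AE_imp[OF imp this] A B
  have "AE p in M \<Otimes>\<^sub>M lborel_01. p \<in> ?A \<longleftrightarrow> p \<in> ?B"
    by simp
  with AE_space show ?thesis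
    by eventually_elim auto
qed

definition dtrans_sum :: "'i set \<Rightarrow> 'w measure \<Rightarrow> ('w \<Rightarrow> 'i \<Rightarrow> real) \<Rightarrow> ('w \<Rightarrow> 'i \<Rightarrow> real)
    \<Rightarrow> 'w \<times> real \<Rightarrow> 'i \<Rightarrow> real" where
  "dtrans_sum I M X Y p =
     (\<lambda>i\<in>I. dtrans (distr M borel (\<lambda>\<omega>. X \<omega> i + Y \<omega> i)) (X (fst p) i + Y (fst p) i) (snd p))"

definition coupling_copula ::
  "'i set \<Rightarrow> 'w measure \<Rightarrow> ('w \<Rightarrow> 'i \<Rightarrow> real) \<Rightarrow> ('w \<Rightarrow> 'i \<Rightarrow> real) \<Rightarrow> ('i \<Rightarrow> real) measure" where
  "coupling_copula I M X Y = distr (M \<Otimes>\<^sub>M lborel_01) (RI I) (dtrans_sum I M X Y)"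

lemma coupling_copula_commute: "coupling_copula I M X Y = coupling_copula I M Y X"
  unfolding coupling_copula_def dtrans_sum_def[abs_def] by (simp add: add.commute)

lemma measurable_dtrans_sum:
  assumes M: "prob_space M" and X: "X \<in> measurable M (RI I)" and Y: "Y \<in> measurable M (RI I)"
  shows "dtrans_sum I M X Y \<in> measurable (M \<Otimes>\<^sub>M lborel_01) (RI I)"
  unfolding dtrans_sum_def[abs_def]
proof (rule measurable_restrict)
  fix i assume "i \<in> I"
  then have Z: "(\<lambda>\<omega>. X \<omega> i + Y \<omega> i) \<in> borel_measurable M"
    using X Y by measurable
  interpret real_distribution "distr M borel (\<lambda>\<omega>. X \<omega> i + Y \<omega> i)"
    using M Z by (simp add: prob_space.real_distribution_distr)
  show "(\<lambda>p. dtrans (distr M borel (\<lambda>\<omega>. X \<omega> i + Y \<omega> i)) (X (fst p) i + Y (fst p) i) (snd p))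
      \<in> borel_measurable (M \<Otimes>\<^sub>M lborel_01)"
    using Z by measurable
qed

lemma copula_measure_coupling_copula:
  assumes M: "prob_space M" and X: "X \<in> measurable M (RI I)" and Y: "Y \<in> measurable M (RI I)"
  shows "copula_measure I (coupling_copula I M X Y)"
proof -
  note D = measurable_dtrans_sum[OF assms]
  have "marg1 (coupling_copula I M X Y) i = uniform_measure lborel {0..1}" if i: "i \<in> I" for i
  proof -
    have Z: "(\<lambda>\<omega>. X \<omega> i + Y \<omega> i) \<in> borel_measurable M"
      using X Y i by measurable
    have "marg1 (coupling_copula I M X Y) i
        = distr (M \<Otimes>\<^sub>M lborel_01) borel
            (\<lambda>p. dtrans (distr M borel (\<lambda>\<omega>. X \<omega> i + Y \<omega> i)) (X (fst p) i + Y (fst p) i) (snd p))"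
      unfolding marg1_def coupling_copula_def using D i
      by (subst distr_distr) (auto simp: comp_def dtrans_sum_def)
    also have "\<dots> = uniform_measure lborel {0..1}"
      by (rule distr_dtrans_random_variable[OF M Z])
    finally show ?thesis .
  qed
  moreover have "prob_space (coupling_copula I M X Y)"
    unfolding coupling_copula_def
    by (rule prob_space.prob_space_distr[OF prob_space_pair[OF M prob_space_lborel_01] D])
  ultimately show ?thesis
    by (simp add: copula_measure_def coupling_copula_def)
qed

lemma underlying_copula_coupling_copula:
  assumes "similarly_ordered_coupling I \<mu> \<nu> M X Y"
  shows "underlying_copula I (coupling_copula I M X Y) \<mu>"
  unfolding underlying_copula_def
proof (intro allI impI)
  fix J and x :: "'a \<Rightarrow> real"
  assume J: "finite J" "J \<subseteq> I"
  have M: "prob_space M" and X: "X \<in> measurable M (RI I)" and Y: "Y \<in> measurable M (RI I)"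
    and \<mu>: "distr M (RI I) X = \<mu>"
    and sim: "\<And>i. i \<in> I \<Longrightarrow>
      AE p in M \<Otimes>\<^sub>M M. (X (fst p) i - X (snd p) i) * (Y (fst p) i - Y (snd p) i) \<ge> 0"
    using assms by (auto simp: similarly_ordered_coupling_def)
  have "cdfJ \<mu> J x = cdfJ (distr (M \<Otimes>\<^sub>M lborel_01) (RI I) (\<lambda>p. X (fst p))) J x"
    using \<mu> by (simp add: distr_pair_fst_comp[OF prob_space_lborel_01 X])
  also have "\<dots> = cdfJ (coupling_copula I M X Y) J (\<lambda>j. cdf1 \<mu> j (x j))"
    unfolding coupling_copula_def
  proof (rule cdfJ_distr_eqI[OF _ measurable_dtrans_sum[OF M X Y] J])
    show "(\<lambda>p. X (fst p)) \<in> measurable (M \<Otimes>\<^sub>M lborel_01) (RI I)"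
      using X by measurable
    fix j assume "j \<in> J"
    with J have j: "j \<in> I" by auto
    have "cdf1 \<mu> j (x j) = measure M {\<omega> \<in> space M. X \<omega> j \<le> x j}"
      using \<mu> cdf1_distr[OF X j] by simp
    then show "AE p in M \<Otimes>\<^sub>M lborel_01.
        X (fst p) j \<le> x j \<longleftrightarrow> dtrans_sum I M X Y p j \<le> cdf1 \<mu> j (x j)"
      using AE_le_iff_dtrans_le[OF M _ _ sim[OF j], of "x j"] X Y j
      by (simp add: dtrans_sum_def)
  qed
  finally show "cdfJ (coupling_copula I M X Y) J (\<lambda>j. cdf1 \<mu> j (x j)) = cdfJ \<mu> J x" ..
qed

lemma similarly_ordered_coupling_swap:
  "similarly_ordered_coupling I \<mu> \<nu> M X Y \<Longrightarrow> similarly_ordered_coupling I \<nu> \<mu> M Y X"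
  by (simp add: similarly_ordered_coupling_def mult.commute)

theorem lemma2p6:
  fixes I :: "'i set" and \<mu> \<nu> :: "('i \<Rightarrow> real) measure"
  assumes "prob_space \<mu>" and "sets \<mu> = sets (RI I)"
      and "prob_space \<nu>" and "sets \<nu> = sets (RI I)"
  shows "((\<exists>C. copula_measure I C \<and> underlying_copula I C \<mu> \<and> underlying_copula I C \<nu>)
            \<longrightarrow> (\<exists>(M :: (('i \<Rightarrow> real) \<times> ('i \<Rightarrow> real)) measure) X Y.
                   similarly_ordered_coupling I \<mu> \<nu> M X Y))
       \<and> ((\<exists>(M :: 'w measure) X Y. similarly_ordered_coupling I \<mu> \<nu> M X Y)
            \<longrightarrow> (\<exists>C. copula_measure I C \<and> underlying_copula I C \<mu> \<and> underlying_copula I C \<nu>))"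
proof (intro conjI impI)
  assume "\<exists>C. copula_measure I C \<and> underlying_copula I C \<mu> \<and> underlying_copula I C \<nu>"
  then obtain C where "copula_measure I C" "underlying_copula I C \<mu>" "underlying_copula I C \<nu>"
    by blast
  from similarly_ordered_coupling_quantile_transforms[OF assms this]
  show "\<exists>(M :: (('i \<Rightarrow> real) \<times> ('i \<Rightarrow> real)) measure) X Y. similarly_ordered_coupling I \<mu> \<nu> M X Y"
    by blast
next
  assume "\<exists>(M :: 'w measure) X Y. similarly_ordered_coupling I \<mu> \<nu> M X Y"
  then obtain M :: "'w measure" and X Y where XY: "similarly_ordered_coupling I \<mu> \<nu> M X Y"
    by blast
  then have "copula_measure I (coupling_copula I M X Y)"
    by (intro copula_measure_coupling_copula) (auto simp: similarly_ordered_coupling_def)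
  moreover have "underlying_copula I (coupling_copula I M X Y) \<mu>"
    using XY by (rule underlying_copula_coupling_copula)
  moreover have "underlying_copula I (coupling_copula I M X Y) \<nu>"
    using underlying_copula_coupling_copula[OF similarly_ordered_coupling_swap[OF XY]]
    by (simp add: coupling_copula_commute)
  ultimately show "\<exists>C. copula_measure I C \<and> underlying_copula I C \<mu> \<and> underlying_copula I C \<nu>"
    by blast
qed

end
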